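(* Fix $\xi\in[0,0.13]$ and let $y_i\in[\cos(2\pi/9),1)$ for all $i\in\{2,3,5,6\}$. Then for any $j\in\{2,3,5,6\}$ with $y_j\ge\max\{y_{j'},\cos(2\pi/10)\}$, one has $\frac{\partial\psi_\xi}{\partial y_j}(\delta,y_2,y_3,y_5,y_6)\ge0$ for all $\delta\in[0,0.13]$.
   Context: Pairing: $2'=6$, $3'=5$, $5'=3$, $6'=2$. For $\xi\ge0$, $y\in(0,1)$: $\eta_\xi(y)=\frac{-2-5y+(1+\xi)^2+\sqrt{(2+5y-(1+\xi)^2)^2+4(2+y)(1-y)(1+\xi)^2}}{2+y}$ (the positive root of $(2+y)\delta^2+2(2+5y-(1+\xi)^2)\delta-4(1-y)(1+\xi)^2$). Let $b(y)=\frac{16}{y+1}-7$, $c_n=\cos(2\pi/n)$, $\beta(y)=b(y)$ on $[c_{10},1]$ and $\beta(y)=\frac{(2-b(c_{10}))b(y)-(2-b(c_9))b(c_{10})}{b(c_9)-b(c_{10})}$ on $[c_9,c_{10}]$. Define $$G(\delta,\eta_2,\eta_3,\eta_5,\eta_6,\beta_2,\beta_3,\beta_5,\beta_6)=\frac{1+\dfrac{\delta[(1+\eta_2)(1+\eta_5)+(1+\eta_3)(1+\eta_6)]-2\delta(\delta+2)}{(2+\eta_2+\eta_6)(2+\eta_3+\eta_5)}}{\sqrt{1+\dfrac{\delta^2+2(1+\beta_2\beta_6)\delta}{(2+\eta_2+\eta_6)^2}}\sqrt{1+\dfrac{\delta^2+2(1+\beta_3\beta_5)\delta}{(2+\eta_3+\eta_5)^2}}}$$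 and $\psi_\xi(\delta,y_2,y_3,y_5,y_6)=G(\delta,\eta_\xi(y_2),\eta_\xi(y_3),\eta_\xi(y_5),\eta_\xi(y_6),\beta(y_2),\beta(y_3),\beta(y_5),\beta(y_6))$. *)

theory Defs
  imports "HOL-Analysis.Analysis"
begin

definition pairing :: "nat \<Rightarrow> nat" where
  "pairing i = (if i = 2 then 6 else if i = 3 then 5 else if i = 5 then 3 else if i = 6 then 2 else i)"

definition eta :: "real \<Rightarrow> real \<Rightarrow> real" where
  "eta \<xi> y = (-2 - 5*y + (1+\<xi>)^2
      + sqrt ((2 + 5*y - (1+\<xi>)^2)^2 + 4*(2+y)*(1-y)*(1+\<xi>)^2)) / (2 + y)"

definition bfun :: "real \<Rightarrow> real" where
  "bfun y = 16 / (y + 1) - 7"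

definition cc :: "real \<Rightarrow> real" where
  "cc n = cos (2 * pi / n)"

text \<open>beta: equal to b on [c10,1], the affine-in-b interpolation on [c9,c10]
  (only values on [c9,1] are ever used).\<close>
definition beta :: "real \<Rightarrow> real" where
  "beta y = (if cc 10 \<le> y then bfun y
     else ((2 - bfun (cc 10)) * bfun y - (2 - bfun (cc 9)) * bfun (cc 10))
          / (bfun (cc 9) - bfun (cc 10)))"

definition G :: "real \<Rightarrow> real \<Rightarrow> real \<Rightarrow> real \<Rightarrow> real \<Rightarrow> real \<Rightarrow> real \<Rightarrow> real \<Rightarrow> real \<Rightarrow> real" where
  "G \<delta> \<eta>2 \<eta>3 \<eta>5 \<eta>6 \<beta>2 \<beta>3 \<beta>5 \<beta>6 =
     (1 + (\<delta> * ((1+\<eta>2)*(1+\<eta>5) + (1+\<eta>3)*(1+\<eta>6)) - 2*\<delta>*(\<delta>+2))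
            / ((2+\<eta>2+\<eta>6) * (2+\<eta>3+\<eta>5)))
     / (sqrt (1 + (\<delta>^2 + 2*(1+\<beta>2*\<beta>6)*\<delta>) / (2+\<eta>2+\<eta>6)^2)
        * sqrt (1 + (\<delta>^2 + 2*(1+\<beta>3*\<beta>5)*\<delta>) / (2+\<eta>3+\<eta>5)^2))"

definition psi :: "real \<Rightarrow> real \<Rightarrow> real \<Rightarrow> real \<Rightarrow> real \<Rightarrow> real \<Rightarrow> real" where
  "psi \<xi> \<delta> y2 y3 y5 y6 =
     G \<delta> (eta \<xi> y2) (eta \<xi> y3) (eta \<xi> y5) (eta \<xi> y6)
       (beta y2) (beta y3) (beta y5) (beta y6)"

definition psi_v :: "real \<Rightarrow> real \<Rightarrow> (nat \<Rightarrow> real) \<Rightarrow> real" where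
  "psi_v \<xi> \<delta> y = psi \<xi> \<delta> (y 2) (y 3) (y 5) (y 6)"

end

theory Submission
  imports Defs
begin

text \<open>
  Up to a reordering of the arguments of \<open>G\<close>, the function \<open>y\<^sub>j \<mapsto> \<psi>\<close> has the form
  \<open>N / (sqrt (A\<^sup>2 + \<delta>\<^sup>2 + 2(1 + \<beta>\<^sub>j \<beta>\<^sub>j\<^sub>')\<delta>) * K)\<close> with \<open>A = 2 + \<eta>\<^sub>j + \<eta>\<^sub>j\<^sub>'\<close>, where
  \<open>N\<close> is affine in \<open>\<eta>\<^sub>j\<close> and \<open>K\<close> does not depend on \<open>y\<^sub>j\<close>; on \<open>[cos(2\<pi>/10), 1)\<close> we have
  \<open>\<beta>\<^sub>j = b(y\<^sub>j)\<close>. The derivative has the sign of \<open>N' Den - N Den'/2\<close>, which is identically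
  \<open>\<delta> (\<beta>\<^sub>j\<^sub>' (-b') N - (-\<eta>') X)\<close> for an explicit \<open>X\<close>. Differentiating the quadratic equation of
  \<open>\<eta>\<close> gives \<open>\<eta>' = -(\<eta>\<^sup>2 + 10\<eta> + 4(1+\<xi>)\<^sup>2) / (2 sqrt disc) \<in> [-0.655, 0]\<close>, whereas
  \<open>-b' = 16/(1+y\<^sub>j)\<^sup>2 \<ge> 4\<close>, and \<open>\<beta>\<^sub>j\<^sub>' \<ge> b(y\<^sub>j)\<close> because \<open>\<beta>\<close> is decreasing and
  \<open>y\<^sub>j\<^sub>' \<le> y\<^sub>j\<close>. Crude numerical bounds (\<open>\<eta> \<le> 0.14\<close>, \<open>cos(2\<pi>/10) \<ge> 0.8\<close>) then
  make the first term dominate.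
\<close>

lemma cos_ge_1_minus_half_square: "1 - x\<^sup>2 / 2 \<le> cos (x::real)"
proof -
  have "(sin (x/2))\<^sup>2 \<le> (x/2)\<^sup>2"
    using abs_sin_x_le_abs_x[of "x/2"] by (metis abs_le_square_iff)
  then show ?thesis
    using cos_double_sin[of "x/2"] by (simp add: power_divide)
qed

lemma cc_ge:
  assumes "0 < n"
  shows "1 - (2 * 3.1416 / n)\<^sup>2 / 2 \<le> cc n"
proof -
  have "(2 * pi / n)\<^sup>2 \<le> (2 * 3.1416 / n)\<^sup>2"
    using pi_approx(2) assms by (intro power_mono divide_right_mono) auto
  then show ?thesis
    using cos_ge_1_minus_half_square[of "2 * pi / n"] unfolding cc_def by linarith
qed

lemma cc10_ge: "4/5 \<le> cc 10"
  using cc_ge[of 10] by (simp add: power2_eq_square)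

lemma cc9_ge: "3/4 \<le> cc 9"
  using cc_ge[of 9] by (simp add: power2_eq_square)

lemma cc9_less_cc10: "cc 9 < cc 10"
  unfolding cc_def using pi_gt_zero by (subst cos_mono_less_eq) (auto simp: field_simps)

lemma one_plus_square_bounds:
  fixes \<xi> :: real
  assumes "0 \<le> \<xi>" "\<xi> \<le> 0.13"
  shows "1 \<le> (1+\<xi>)\<^sup>2" "(1+\<xi>)\<^sup>2 \<le> 1.2769"
  using power_mono[of 1 "1+\<xi>" 2] power_mono[of "1+\<xi>" "1.13" 2] assms
  by (auto simp: power2_eq_square)

lemma eta_sqrt_eq:
  assumes "-2 < y"
  shows "sqrt ((2 + 5*y - (1+\<xi>)\<^sup>2)\<^sup>2 + 4*(2+y)*(1-y)*(1+\<xi>)\<^sup>2)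
    = (2+y) * eta \<xi> y + (2 + 5*y - (1+\<xi>)\<^sup>2)"
  using assms by (simp add: eta_def)

lemma eta_nonneg:
  assumes "-2 < y" "y \<le> 1"
  shows "0 \<le> eta \<xi> y"
proof -
  let ?c = "2 + 5*y - (1+\<xi>)\<^sup>2"
  have "?c \<le> sqrt (?c\<^sup>2)" by simp
  also have "\<dots> \<le> sqrt (?c\<^sup>2 + 4*(2+y)*(1-y)*(1+\<xi>)\<^sup>2)"
    using assms by (intro real_sqrt_le_mono) simp
  finally show ?thesis
    using eta_sqrt_eq[OF assms(1), of \<xi>] assms by (simp add: zero_le_mult_iff)
qed

lemma eta_quadratic:
  assumes "-2 < y" "y \<le> 1"
  shows "(2+y) * (eta \<xi> y)\<^sup>2 + 2*(2 + 5*y - (1+\<xi>)\<^sup>2) * eta \<xi> y - 4*(1-y)*(1+\<xi>)\<^sup>2 = 0"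
proof -
  let ?c = "2 + 5*y - (1+\<xi>)\<^sup>2"
  have "((2+y) * eta \<xi> y + ?c)\<^sup>2 = ?c\<^sup>2 + 4*(2+y)*(1-y)*(1+\<xi>)\<^sup>2"
    using eta_sqrt_eq[OF assms(1), of \<xi>, symmetric] assms by simp
  then have "(2+y) * ((2+y) * (eta \<xi> y)\<^sup>2 + 2*?c * eta \<xi> y - 4*(1-y)*(1+\<xi>)\<^sup>2) = 0"
    by algebra
  then show ?thesis using assms by simp
qed

lemma eta_le_if_quadratic_nonneg:
  assumes "-2 < y" "y \<le> 1" "(1+\<xi>)\<^sup>2 < 2 + 5*y" "0 \<le> h"
    and "0 \<le> (2+y) * h\<^sup>2 + 2*(2 + 5*y - (1+\<xi>)\<^sup>2) * h - 4*(1-y)*(1+\<xi>)\<^sup>2"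
  shows "eta \<xi> y \<le> h"
proof (rule ccontr)
  assume "\<not> eta \<xi> y \<le> h"
  moreover have "0 < (2+y) * (eta \<xi> y + h) + 2*(2 + 5*y - (1+\<xi>)\<^sup>2)"
    using assms eta_nonneg[OF assms(1,2), of \<xi>] by (intro add_nonneg_pos) auto
  ultimately have "0 < (eta \<xi> y - h) * ((2+y) * (eta \<xi> y + h) + 2*(2 + 5*y - (1+\<xi>)\<^sup>2))"
    by simp
  also have "\<dots> = - ((2+y) * h\<^sup>2 + 2*(2 + 5*y - (1+\<xi>)\<^sup>2) * h - 4*(1-y)*(1+\<xi>)\<^sup>2)"
    using eta_quadratic[OF assms(1,2), of \<xi>] by (simp add: algebra_simps power2_eq_square)
  finally show False using assms(5) by simp
qed

lemma eta_upper_bounds: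
  assumes "0 \<le> \<xi>" "\<xi> \<le> 0.13" "3/4 \<le> y" "y \<le> 1"
  shows "eta \<xi> y \<le> 0.14" and "4/5 \<le> y \<Longrightarrow> eta \<xi> y \<le> 0.106"
proof -
  define w where "w = (1+\<xi>)\<^sup>2"
  have w: "1 \<le> w" "w \<le> 1.2769" using one_plus_square_bounds assms by (simp_all add: w_def)
  have "(1-y) * w \<le> (1-y) * 1.2769" using w assms by (intro mult_left_mono) auto
  then have q: "0 \<le> (2+y) * h\<^sup>2 + 2*(2 + 5*y - w) * h - 4*(1-y)*w"
    if "0 \<le> h" "4*(1-y)*1.2769 \<le> (2+y) * h\<^sup>2 + 2*(2 + 5*y - 1.2769) * h" for h
  proof -
    have "0 \<le> (1.2769 - w) * h" using that w by simp
    then show ?thesis using that \<open>(1-y) * w \<le> _\<close> by (simp add: algebra_simps)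
  qed
  show "eta \<xi> y \<le> 0.14"
    using assms w by (intro eta_le_if_quadratic_nonneg q[unfolded w_def])
      (auto simp: w_def power2_eq_square field_simps)
  show "eta \<xi> y \<le> 0.106" if "4/5 \<le> y"
    using assms w that by (intro eta_le_if_quadratic_nonneg q[unfolded w_def])
      (auto simp: w_def power2_eq_square field_simps)
qed

lemma eta_has_derivative:
  assumes "0 \<le> \<xi>" "-2 < y" "y < 1"
  shows "(eta \<xi> has_real_derivative
    - ((eta \<xi> y)\<^sup>2 + 10 * eta \<xi> y + 4*(1+\<xi>)\<^sup>2)
      / (2 * ((2+y) * eta \<xi> y + (2 + 5*y - (1+\<xi>)\<^sup>2)))) (at y)"
proof -
  define w where "w = (1+\<xi>)\<^sup>2"
  define c where "c x = 2 + 5*x - w" for x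
  define D where "D x = (c x)\<^sup>2 + 4*(2+x)*(1-x)*w" for x
  define R where "R = sqrt (D y)"
  have "0 < w" using assms by (simp add: w_def)
  then have "0 < D y" using assms by (simp add: D_def add_nonneg_pos)
  then have R: "0 < R" "R\<^sup>2 = D y" by (simp_all add: R_def)
  have eta_eq: "eta \<xi> = (\<lambda>x. (sqrt (D x) - c x) / (2+x))"
    by (auto simp: eta_def D_def c_def w_def fun_eq_iff algebra_simps)
  have R_eq: "R = (2+y) * eta \<xi> y + c y"
    using assms by (simp add: eta_eq R_def field_simps)
  have "((\<lambda>x. (sqrt (D x) - c x) / (2+x)) has_real_derivative
      (((10 * c y - 4*w*(1 + 2*y)) / (2*R) - 5) * (2+y) - (R - c y)) / (2+y)\<^sup>2) (at y)"
    using \<open>0 < D y\<close> assms unfolding D_def c_def R_def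
    by (auto intro!: derivative_eq_intros simp: power2_eq_square field_simps)
  moreover have "(((10 * c y - 4*w*(1 + 2*y)) / (2*R) - 5) * (2+y) - (R - c y)) / (2+y)\<^sup>2
      = - ((eta \<xi> y)\<^sup>2 + 10 * eta \<xi> y + 4*w) / (2*R)"
  proof -
    have "(((10 * c' - 4*w*(1 + 2*y)) / (2*P) - 5) * (2+y) - (P - c')) / (2+y)\<^sup>2
        = - (e\<^sup>2 + 10 * e + 4*w) / (2*P)"
      if P: "P = (2+y) * e + c'" "P\<^sup>2 = c'\<^sup>2 + 4*(2+y)*(1-y)*w" "0 < P" for P e c'
    proof -
      have "(((10 * c' - 4*w*(1 + 2*y)) / (2*P) - 5) * (2+y) - (P - c')) / (2+y)\<^sup>2
          = ((10 * c' - 4*w*(1 + 2*y) - 10*P) * (2+y) - 2*P*(P - c')) / (2*P*(2+y)\<^sup>2)"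
        using P(3) assms by (simp add: field_simps power2_eq_square)
      also have "(10 * c' - 4*w*(1 + 2*y) - 10*P) * (2+y) - 2*P*(P - c')
          = - (e\<^sup>2 + 10 * e + 4*w) * (2+y)\<^sup>2"
        using P(1,2) by algebra
      finally show ?thesis using assms by (simp add: power2_eq_square)
    qed
    then show ?thesis using R R_eq by (simp add: D_def)
  qed
  ultimately have "(eta \<xi> has_real_derivative
      - ((eta \<xi> y)\<^sup>2 + 10 * eta \<xi> y + 4*w) / (2*R)) (at y)"
    unfolding eta_eq[symmetric] by simp
  then show ?thesis by (simp add: R_eq c_def w_def)
qed

lemma eta_derivative_bounds:
  assumes "0 \<le> \<xi>" "\<xi> \<le> 0.13" "4/5 \<le> y" "y < 1"
  obtains e' where "(eta \<xi> has_real_derivative e') (at y)" "-0.655 \<le> e'" "e' \<le> 0"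
proof
  define e where "e = eta \<xi> y"
  define w where "w = (1+\<xi>)\<^sup>2"
  have w: "1 \<le> w" "w \<le> 1.2769" using one_plus_square_bounds assms by (simp_all add: w_def)
  have e: "0 \<le> e" "e \<le> 0.106"
    using eta_nonneg eta_upper_bounds(2) assms by (auto simp: e_def)
  define R where "R = (2+y) * e + (2 + 5*y - w)"
  have "0 \<le> (2+y) * e" using e assms by simp
  then have R: "4.7231 \<le> R"
    using w assms by (simp add: R_def; linarith)
  have "0 < 2 * R" using R by simp
  have "e\<^sup>2 \<le> 0.106 * e" using e mult_right_mono[of e "0.106" e] by (simp add: power2_eq_square)
  then have "e\<^sup>2 + 10 * e + 4*w \<le> 0.655 * (2 * R)"
    using e w R by (simp; linarith)
  moreover have "0 \<le> e\<^sup>2 + 10 * e + 4*w" using e w by simp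
  ultimately show "-0.655 \<le> - (e\<^sup>2 + 10 * e + 4*w) / (2 * R)"
    and "- (e\<^sup>2 + 10 * e + 4*w) / (2 * R) \<le> 0"
    using \<open>0 < 2 * R\<close> by (simp_all add: pos_le_divide_eq divide_le_0_iff)
  show "(eta \<xi> has_real_derivative - (e\<^sup>2 + 10 * e + 4*w) / (2 * R)) (at y)"
    unfolding R_def e_def w_def using eta_has_derivative assms by simp
qed

lemma bfun_antimono: "-1 < x \<Longrightarrow> x \<le> y \<Longrightarrow> bfun y \<le> bfun x"
  unfolding bfun_def by (simp add: divide_left_mono)

lemma bfun_ge_1: "-1 < y \<Longrightarrow> y \<le> 1 \<Longrightarrow> 1 \<le> bfun y"
  using bfun_antimono[of y 1] by (simp add: bfun_def)

lemma bfun_le: "4/5 \<le> y \<Longrightarrow> bfun y \<le> 17/9"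
  using bfun_antimono[of "4/5" y] by (simp add: bfun_def)

lemma bfun_has_derivative: "-1 < y \<Longrightarrow> (bfun has_real_derivative - 16 / (y+1)\<^sup>2) (at y)"
  unfolding bfun_def[abs_def] by (auto intro!: derivative_eq_intros simp: power2_eq_square)

lemma bfun_cc10_le_beta:
  assumes "cc 9 \<le> y" "y < cc 10"
  shows "bfun (cc 10) \<le> beta y"
proof -
  define b9 b10 where "b9 = bfun (cc 9)" and "b10 = bfun (cc 10)"
  have "b10 < b9"
    using cc9_less_cc10 cc9_ge by (simp add: b9_def b10_def bfun_def divide_strict_left_mono)
  moreover have "b10 \<le> bfun y" "b10 \<le> 17/9"
    using assms cc9_ge cc10_ge bfun_antimono bfun_le by (auto simp: b10_def)
  then have "b10 * (b9 - b10) \<le> (2 - b10) * bfun y - (2 - b9) * b10"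
    using mult_right_mono[of b10 "bfun y" "2 - b10"] by (simp add: algebra_simps)
  ultimately show ?thesis
    using assms by (simp add: beta_def b9_def b10_def pos_le_divide_eq)
qed

lemma beta_ge_bfun:
  assumes "cc 9 \<le> y" "y \<le> t" "cc 10 \<le> t"
  shows "bfun t \<le> beta y"
proof (cases "cc 10 \<le> y")
  case True
  then show ?thesis using assms cc10_ge bfun_antimono by (simp add: beta_def)
next
  case False
  then show ?thesis
    using assms cc10_ge bfun_antimono[of "cc 10" t] bfun_cc10_le_beta[of y] by force
qed

lemma beta_ge_1:
  assumes "cc 9 \<le> y" "y \<le> 1"
  shows "1 \<le> beta y"
proof -
  have "cc 10 \<le> 1" by (simp add: cc_def)
  have "bfun (max y (cc 10)) \<le> beta y" by (rule beta_ge_bfun) (use assms in auto)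
  moreover have "1 \<le> bfun (max y (cc 10))"
    by (rule bfun_ge_1) (use assms cc10_ge \<open>cc 10 \<le> 1\<close> in auto)
  ultimately show ?thesis by linarith
qed

text \<open>
  \<open>G\<close> with the varied index \<open>t = j\<close> and its partner \<open>p = j'\<close> first, followed by the
  index \<open>c\<close> whose factor \<open>1 + \<eta>\<^sub>c\<close> multiplies \<open>1 + \<eta>\<^sub>t\<close> in the numerator, and \<open>d = c'\<close>.
\<close>
definition G_pair ::
  "real \<Rightarrow> real \<Rightarrow> real \<Rightarrow> real \<Rightarrow> real \<Rightarrow> real \<Rightarrow> real \<Rightarrow> real \<Rightarrow> real \<Rightarrow> real" where
  "G_pair \<delta> et ep ec ed bt bp bc bd = G \<delta> et ed ec ep bt bd bc bp"

lemma psi_v_update_eq_G_pair: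
  assumes "j \<in> {2,3,5,6}"
  obtains c d where "c \<in> {2,3,5,6}" "d \<in> {2,3,5,6}"
    "\<And>z. psi_v \<xi> \<delta> (y(j := z)) =
      G_pair \<delta> (eta \<xi> z) (eta \<xi> (y (pairing j))) (eta \<xi> (y c)) (eta \<xi> (y d))
        (beta z) (beta (y (pairing j))) (beta (y c)) (beta (y d))"
proof -
  note defs = psi_v_def psi_def G_pair_def G_def pairing_def
  from assms consider "j = 2" | "j = 3" | "j = 5" | "j = 6" by auto
  then show ?thesis
  proof cases
    case 1 show ?thesis by (rule that[of 5 3]) (auto simp: 1 defs ac_simps)
  next
    case 2 show ?thesis by (rule that[of 6 2]) (auto simp: 2 defs ac_simps)
  next
    case 3 show ?thesis by (rule that[of 2 6]) (auto simp: 3 defs ac_simps)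
  next
    case 4 show ?thesis by (rule that[of 3 5]) (auto simp: 4 defs ac_simps)
  qed
qed

lemma sqrt_1_plus_divide_square:
  assumes "0 < a"
  shows "sqrt (1 + q / a\<^sup>2) = sqrt (a\<^sup>2 + q) / a"
proof -
  have "1 + q / a\<^sup>2 = (a\<^sup>2 + q) / a\<^sup>2" using assms by (simp add: field_simps)
  then show ?thesis using assms by (simp add: real_sqrt_divide)
qed

lemma G_pair_eq_quotient:
  assumes "0 < 2 + et + ep" "0 < 2 + ec + ed"
  shows "G_pair \<delta> et ep ec ed bt bp bc bd =
    ((2+et+ep) * (2+ec+ed) + \<delta> * ((1+et)*(1+ec) + (1+ed)*(1+ep)) - 2*\<delta>*(\<delta>+2))
    / (sqrt ((2+et+ep)\<^sup>2 + \<delta>\<^sup>2 + 2*(1 + bt*bp)*\<delta>)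
       * sqrt ((2+ec+ed)\<^sup>2 + \<delta>\<^sup>2 + 2*(1 + bc*bd)*\<delta>))"
proof -
  have *: "(1 + X / (A*B)) / (s / A * (s' / B)) = (A*B + X) / (s * s')"
    if "0 < A" "0 < B" for A B X s s' :: real
    using that by (cases "s * s' = 0") (auto simp: field_simps)
  define A B X Q Q' where "A = 2+et+ep" and "B = 2+ec+ed"
    and "X = \<delta> * ((1+et)*(1+ec) + (1+ed)*(1+ep)) - 2*\<delta>*(\<delta>+2)"
    and "Q = \<delta>\<^sup>2 + 2*(1 + bt*bp)*\<delta>" and "Q' = \<delta>\<^sup>2 + 2*(1 + bc*bd)*\<delta>"
  have "G_pair \<delta> et ep ec ed bt bp bc bd
      = (1 + X / (A*B)) / (sqrt (1 + Q / A\<^sup>2) * sqrt (1 + Q' / B\<^sup>2))"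
    unfolding G_pair_def G_def A_def B_def X_def Q_def Q'_def by (simp add: ac_simps)
  also have "\<dots> = (1 + X / (A*B)) / (sqrt (A\<^sup>2 + Q) / A * (sqrt (B\<^sup>2 + Q') / B))"
    using assms by (simp add: A_def B_def sqrt_1_plus_divide_square)
  also have "\<dots> = (A*B + X) / (sqrt (A\<^sup>2 + Q) * sqrt (B\<^sup>2 + Q'))"
    using assms by (intro *) (simp_all add: A_def B_def)
  finally show ?thesis by (simp only: A_def B_def X_def Q_def Q'_def add.assoc add_diff_eq)
qed

lemma DERIV_quotient_sqrt:
  assumes "(n has_real_derivative n') (at t)" "(d has_real_derivative d') (at t)" "0 < d t"
  shows "((\<lambda>x. n x / (sqrt (d x) * K)) has_real_derivative
    (n' * d t - n t * d' / 2) / (d t * sqrt (d t) * K)) (at t)"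
proof (cases "K = 0")
  case False
  have "((\<lambda>x. n x / (sqrt (d x) * K)) has_real_derivative
      (n' * (sqrt (d t) * K) - n t * (d' * inverse (sqrt (d t)) / 2 * K)) / (sqrt (d t) * K)\<^sup>2) (at t)"
    using assms False by (auto intro!: derivative_eq_intros simp: power2_eq_square)
  moreover have "(n' * (sqrt (d t) * K) - n t * (d' * inverse (sqrt (d t)) / 2 * K))
      / (sqrt (d t) * K)\<^sup>2 = (n' * d t - n t * d' / 2) / (d t * sqrt (d t) * K)"
    using assms(3) False by (simp add: field_simps power2_eq_square)
  ultimately show ?thesis by simp
qed simp

lemma G_pair_derivative_key_inequality:
  fixes \<delta> e ep ec ed bt bp u v :: real
  assumes "0 \<le> \<delta>" "\<delta> \<le> 0.13" "0 \<le> e" "e \<le> 0.106"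
    and "0 \<le> ep" "ep \<le> 0.14" "0 \<le> ec" "ec \<le> 0.14" "0 \<le> ed" "ed \<le> 0.14"
    and "1 \<le> bt" "bt \<le> 17/9" "bt \<le> bp" "0 \<le> u" "u \<le> 0.655" "4 \<le> v"
  shows "u * ((2+e+ep)*(1+ep)*(ec-ed) + 2*(\<delta>+2)*(2+e+ep)
      + (2+ec+ed+\<delta>*(1+ec))*(\<delta>+2+2*bt*bp))
    \<le> bp * v * ((2+e+ep)*(2+ec+ed) + \<delta>*((1+e)*(1+ec) + (1+ed)*(1+ep)) - 2*\<delta>*(\<delta>+2))"
proof -
  define A B K where "A = 2+e+ep" and "B = 2+ec+ed" and "K = 2+ec+ed+\<delta>*(1+ec)"
  define N where "N = A*B + \<delta>*((1+e)*(1+ec) + (1+ed)*(1+ep)) - 2*\<delta>*(\<delta>+2)"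
  define X where "X = A*(1+ep)*(ec-ed) + 2*(\<delta>+2)*A + K*(\<delta>+2+2*bt*bp)"
  have A: "2 \<le> A" "A \<le> 2.246" and B: "2 \<le> B" using assms by (simp_all add: A_def B_def)
  have "\<delta>*(1+ec) \<le> 0.13 * 1.14" using assms by (intro mult_mono) auto
  then have K: "0 \<le> K" "K \<le> 2.4282" using assms by (simp_all add: K_def)
  have "4 \<le> A*B" using mult_mono[OF A(1) B] A(1) by simp
  moreover have "\<delta>*(\<delta>+2) \<le> 0.13 * 2.13" using assms by (intro mult_mono) auto
  moreover have "0 \<le> \<delta>*((1+e)*(1+ec) + (1+ed)*(1+ep))" using assms by simp
  ultimately have N: "3.4462 \<le> N" unfolding N_def by simp
  have "A*(1+ep) \<le> 2.246 * 1.14" using assms A by (intro mult_mono) auto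
  moreover have "A*(1+ep)*(ec-ed) \<le> A*(1+ep)*0.14" using assms A by (intro mult_left_mono) auto
  ultimately have "A*(1+ep)*(ec-ed) \<le> 2.246 * 1.14 * 0.14" by simp
  moreover have "(\<delta>+2)*A \<le> 2.13 * 2.246" using assms A by (intro mult_mono) auto
  moreover have "K*(\<delta>+2+2*bt*bp) \<le> 2.4282 * (2.13+2*bt*bp)"
    using assms K by (intro mult_mono) auto
  ultimately have X: "X \<le> 15.0985 + 4.8564 * (bt*bp)"
    unfolding X_def by (simp add: algebra_simps)
  have "u * X \<le> u * (15.0985 + 4.8564 * (bt*bp))"
    using assms X by (intro mult_left_mono) auto
  also have "\<dots> \<le> 0.655 * (15.0985 + 4.8564 * (bt*bp))"
    using assms by (intro mult_right_mono) auto
  also have "\<dots> \<le> bp * 4 * 3.4462"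
  proof -
    define h1 h2 where "h1 = (bt-1) * (17/9-bt)" and "h2 = (bp-bt) * (13.7848 - 3.180942*bt)"
    have "0 \<le> h1" "0 \<le> h2" using assms by (simp_all add: h1_def h2_def)
    have "bp * 4 * 3.4462 - 0.655 * (15.0985 + 4.8564 * (bt*bp))
        = h2 + 3.180942 * h1 + (13.7848 - 3.180942*26/9) * bt + 3.180942*17/9 - 0.655 * 15.0985"
      by (simp add: h1_def h2_def field_simps)
    also have "\<dots> \<ge> 0" using \<open>0 \<le> h1\<close> \<open>0 \<le> h2\<close> assms by simp
    finally show ?thesis by simp
  qed
  also have "\<dots> \<le> bp * v * N"
    using assms N by (intro mult_mono) auto
  finally show ?thesis unfolding X_def N_def A_def B_def K_def .
qed

lemma G_pair_derivative_numerator_nonneg: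
  fixes \<delta> e ep ec ed bt bp e' b' :: real
  assumes "0 \<le> \<delta>" "\<delta> \<le> 0.13" "0 \<le> e" "e \<le> 0.106"
    and "0 \<le> ep" "ep \<le> 0.14" "0 \<le> ec" "ec \<le> 0.14" "0 \<le> ed" "ed \<le> 0.14"
    and "1 \<le> bt" "bt \<le> 17/9" "bt \<le> bp" "-0.655 \<le> e'" "e' \<le> 0" "b' \<le> -4"
  shows "0 \<le> e' * (2+ec+ed + \<delta>*(1+ec)) * ((2+e+ep)\<^sup>2 + \<delta>\<^sup>2 + 2*(1 + bt*bp)*\<delta>)
    - ((2+e+ep)*(2+ec+ed) + \<delta>*((1+e)*(1+ec) + (1+ed)*(1+ep)) - 2*\<delta>*(\<delta>+2))
      * ((2+e+ep)*e' + \<delta>*bp*b')"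
proof -
  let ?N = "(2+e+ep)*(2+ec+ed) + \<delta>*((1+e)*(1+ec) + (1+ed)*(1+ep)) - 2*\<delta>*(\<delta>+2)"
  let ?X = "(2+e+ep)*(1+ep)*(ec-ed) + 2*(\<delta>+2)*(2+e+ep)
    + (2+ec+ed+\<delta>*(1+ec))*(\<delta>+2+2*bt*bp)"
  have "(-e') * ?X \<le> bp * (-b') * ?N"
    by (rule G_pair_derivative_key_inequality) (use assms in auto)
  moreover have "e' * (2+ec+ed + \<delta>*(1+ec)) * ((2+e+ep)\<^sup>2 + \<delta>\<^sup>2 + 2*(1 + bt*bp)*\<delta>)
      - ?N * ((2+e+ep)*e' + \<delta>*bp*b') = \<delta> * (bp * (-b') * ?N - (-e') * ?X)"
    by (simp add: algebra_simps power2_eq_square)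
  ultimately show ?thesis using assms by simp
qed

lemma G_pair_quotient_has_nonneg_derivative:
  fixes e b :: "real \<Rightarrow> real"
  assumes "(e has_real_derivative e') (at t)" "(b has_real_derivative b') (at t)"
    and "0 \<le> \<delta>" "\<delta> \<le> 0.13" "0 \<le> e t" "e t \<le> 0.106"
    and "0 \<le> ep" "ep \<le> 0.14" "0 \<le> ec" "ec \<le> 0.14" "0 \<le> ed" "ed \<le> 0.14"
    and "1 \<le> b t" "b t \<le> 17/9" "b t \<le> bp" "-0.655 \<le> e'" "e' \<le> 0" "b' \<le> -4" "0 < K"
  shows "\<exists>D. ((\<lambda>x. ((2 + e x + ep) * (2+ec+ed) + \<delta>*((1 + e x)*(1+ec) + (1+ed)*(1+ep))
      - 2*\<delta>*(\<delta>+2)) / (sqrt ((2 + e x + ep)\<^sup>2 + \<delta>\<^sup>2 + 2*(1 + b x * bp)*\<delta>) * K)) has_real_derivative D) (at t) \<and> 0 \<le> D"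
proof -
  define n where
    "n x = (2 + e x + ep) * (2+ec+ed) + \<delta>*((1 + e x)*(1+ec) + (1+ed)*(1+ep)) - 2*\<delta>*(\<delta>+2)" for x
  define d where "d x = (2 + e x + ep)\<^sup>2 + \<delta>\<^sup>2 + 2*(1 + b x * bp)*\<delta>" for x
  define n' where "n' = e' * (2+ec+ed + \<delta>*(1+ec))"
  define d2 where "d2 = (2 + e t + ep) * e' + \<delta>*bp*b'"
  have "(n has_real_derivative n') (at t)"
    unfolding n_def n'_def by (auto intro!: derivative_eq_intros assms(1) simp: algebra_simps)
  moreover have "(d has_real_derivative 2 * d2) (at t)"
    unfolding d_def d2_def by (auto intro!: derivative_eq_intros assms(1,2) simp: algebra_simps)
  moreover have "0 < d t" using assms by (auto simp: d_def intro!: add_pos_nonneg)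
  ultimately have "((\<lambda>x. n x / (sqrt (d x) * K)) has_real_derivative
      (n' * d t - n t * d2) / (d t * sqrt (d t) * K)) (at t)"
    using DERIV_quotient_sqrt[where d' = "2 * d2"] by simp
  moreover have "0 \<le> n' * d t - n t * d2"
    using G_pair_derivative_numerator_nonneg[of \<delta> "e t" ep ec ed "b t" bp e' b'] assms
    by (simp add: n_def d_def n'_def d2_def)
  ultimately show ?thesis
    using \<open>0 < d t\<close> \<open>0 < K\<close> unfolding n_def d_def by fastforce
qed

lemma G_pair_has_nonneg_derivative:
  fixes \<xi> \<delta> t ep ec ed bp bc bd :: real
  assumes "0 \<le> \<xi>" "\<xi> \<le> 0.13" "0 \<le> \<delta>" "\<delta> \<le> 0.13" "cc 10 \<le> t" "t < 1"
    and "0 \<le> ep" "ep \<le> 0.14" "0 \<le> ec" "ec \<le> 0.14" "0 \<le> ed" "ed \<le> 0.14"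
    and "bfun t \<le> bp" "1 \<le> bc" "1 \<le> bd"
  shows "\<exists>D. ((\<lambda>x. G_pair \<delta> (eta \<xi> x) ep ec ed (beta x) bp bc bd) has_real_derivative D)
    (at t within {cc 10..<1}) \<and> 0 \<le> D"
proof -
  define K where "K = sqrt ((2+ec+ed)\<^sup>2 + \<delta>\<^sup>2 + 2*(1 + bc*bd)*\<delta>)"
  define b' where "b' = - 16 / (t+1)\<^sup>2"
  have t: "4/5 \<le> t" "t < 1" using assms cc10_ge by auto
  obtain e' where e': "(eta \<xi> has_real_derivative e') (at t)" "-0.655 \<le> e'" "e' \<le> 0"
    using eta_derivative_bounds[OF assms(1,2) t] by blast
  have "(t+1)\<^sup>2 \<le> 2\<^sup>2" using t by (intro power_mono) auto
  then have b': "(bfun has_real_derivative b') (at t)" "b' \<le> -4"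
    using t bfun_has_derivative[of t] by (auto simp: b'_def pos_le_divide_eq)
  have "0 < K" using assms by (auto simp: K_def intro!: add_pos_nonneg)
  define q where "q x = ((2 + eta \<xi> x + ep) * (2+ec+ed) + \<delta>*((1 + eta \<xi> x)*(1+ec) + (1+ed)*(1+ep))
      - 2*\<delta>*(\<delta>+2)) / (sqrt ((2 + eta \<xi> x + ep)\<^sup>2 + \<delta>\<^sup>2 + 2*(1 + bfun x * bp)*\<delta>) * K)" for x
  have "\<exists>D. (q has_real_derivative D) (at t) \<and> 0 \<le> D"
    unfolding q_def[abs_def]
    by (rule G_pair_quotient_has_nonneg_derivative[OF e'(1) b'(1)])
      (use assms e' b' t \<open>0 < K\<close> eta_nonneg[of t \<xi>] eta_upper_bounds(2)[of \<xi> t]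
        bfun_ge_1[of t] bfun_le[of t] in auto)
  then obtain D where D: "(q has_real_derivative D) (at t)" "0 \<le> D" by blast
  have "G_pair \<delta> (eta \<xi> x) ep ec ed (beta x) bp bc bd = q x" if "x \<in> {cc 10..<1}" for x
  proof -
    have "beta x = bfun x" "0 \<le> eta \<xi> x" using that cc10_ge eta_nonneg by (auto simp: beta_def)
    then show ?thesis using assms by (simp add: G_pair_eq_quotient K_def q_def)
  qed
  then have "((\<lambda>x. G_pair \<delta> (eta \<xi> x) ep ec ed (beta x) bp bc bd) has_real_derivative D)
      (at t within {cc 10..<1})"
    using assms
    by (intro has_field_derivative_transform_within[OF has_field_derivative_at_within[OF D(1)]
        zero_less_one]) auto
  with D(2) show ?thesis by blast
qed

theorem lemma4p3:
  fixes \<xi> :: real and y :: "nat \<Rightarrow> real" and j :: nat and \<delta> :: real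
  assumes "0 \<le> \<xi>" and "\<xi> \<le> 0.13"
    and "\<forall>i\<in>{2,3,5,6}. cc 9 \<le> y i \<and> y i < 1"
    and "j \<in> {2,3,5,6}"
    and "y (pairing j) \<le> y j" and "cc 10 \<le> y j"
    and "0 \<le> \<delta>" and "\<delta> \<le> 0.13"
  shows "\<exists>D. ((\<lambda>t. psi_v \<xi> \<delta> (y(j := t))) has_real_derivative D)
               (at (y j) within {cc 10..<1}) \<and> 0 \<le> D"
proof -
  obtain c d where cd: "c \<in> {2,3,5,6}" "d \<in> {2,3,5,6}" and psi_eq:
    "\<And>z. psi_v \<xi> \<delta> (y(j := z)) =
      G_pair \<delta> (eta \<xi> z) (eta \<xi> (y (pairing j))) (eta \<xi> (y c)) (eta \<xi> (y d))
        (beta z) (beta (y (pairing j))) (beta (y c)) (beta (y d))"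
    using psi_v_update_eq_G_pair[OF assms(4)] by metis
  have y: "cc 9 \<le> y i" "y i < 1" "0 \<le> eta \<xi> (y i)" "eta \<xi> (y i) \<le> 0.14" "1 \<le> beta (y i)"
    if "i \<in> {2,3,5,6}" for i
    using assms(1-3) that cc9_ge eta_nonneg eta_upper_bounds(1) beta_ge_1 by force+
  have "pairing j \<in> {2,3,5,6}" using assms(4) by (auto simp: pairing_def)
  then have "bfun (y j) \<le> beta (y (pairing j))"
    using y assms(5,6) by (intro beta_ge_bfun) auto
  then show ?thesis
    unfolding psi_eq using assms y[OF \<open>pairing j \<in> _\<close>] y[OF cd(1)] y[OF cd(2)] y[OF assms(4)]
    by (intro G_pair_has_nonneg_derivative) auto
qed

end
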